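(* Let $H$ and $\Xi^*$ be either ($H_D$, $\Xi^+$), ($H_A$, $\Xi^+$), or ($H_{E_k}$, $\Xi$), with corresponding criterion $\phi\in\{\phi_D,\phi_A,\phi_{E_k}\}$. Let $\Xi'\subseteq\Xi^*$ be a finite nonempty set, and let $(\xi',t')$ be an optimal solution of the linear program: maximize $t$ over $\xi\in\Xi$, $t\in\mathbb{R}$, subject to $\sum_{x\in\mathcal{X}}H(\mu,x)\xi(x)\ge t$ for all $\mu\in\Xi'$. If $\xi'\in\Xi^*$, then $$\phi(\xi')\le \sup_{\xi\in\Xi^*}\phi(\xi)\le t'.$$
   Context: $\mathcal{X}$ finite, $f:\mathcal{X}\to\mathbb{R}^p$, $\Xi$ the probability measures on $\mathcal{X}$, $M(\xi)=\sum_x f(x)f^\top(x)\xi(x)$, $\Xi^+=\{\mu\in\Xi: M(\mu)\text{ nonsingular}\}$. $\phi_D(\xi)=\det^{1/p}M(\xi)$, $\phi_A(\xi)=1/\mathrm{tr}M^{-1}(\xi)$ (on $\Xi^+$), $\phi_{E_k}(\xi)$ = sum of the $k$ smallest eigenvalues of $M(\xi)$. $H_D(\mu,x)=\frac{\det^{1/p}[M(\mu)]}{p}f^\top(x)M^{-1}(\mu)f(x)$, $H_A(\mu,x)=\|M^{-1}(\mu)f(x)\|^2/[\mathrm{tr}M^{-1}(\mu)]^2$, $H_{E_k}(\mu,x)=\|P^{(k)}(\mu)f(x)\|^2$, where $P^{(k)}(\mu)=\sum_{i=1}^k u_iu_i^\top$ for an orthonormal eigenbasis $u_1,\dots,u_p$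 of $M(\mu)$ ordered by increasing eigenvalues. *)

theory Defs
  imports "HOL-Analysis.Analysis" "HOL-Computational_Algebra.Polynomial" "HOL-Library.Multiset"
begin

definition design :: "('x::finite \<Rightarrow> real) \<Rightarrow> bool" where
  "design \<xi> \<longleftrightarrow> (\<forall>x. \<xi> x \<ge> 0) \<and> (\<Sum>x\<in>UNIV. \<xi> x) = 1"

definition Designs :: "('x::finite \<Rightarrow> real) set" where
  "Designs = {\<xi>. design \<xi>}"

definition outer :: "real^'p \<Rightarrow> real^'p \<Rightarrow> real^'p^'p" where
  "outer u v = (\<chi> i j. u $ i * v $ j)"

definition Minf :: "('x::finite \<Rightarrow> real^'p) \<Rightarrow> ('x \<Rightarrow> real) \<Rightarrow> real^'p^'p" where
  "Minf f \<xi> = (\<Sum>x\<in>UNIV. \<xi> x *\<^sub>R outer (f x) (f x))"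

definition DesignsPlus :: "('x::finite \<Rightarrow> real^'p) \<Rightarrow> ('x \<Rightarrow> real) set" where
  "DesignsPlus f = {\<xi>. design \<xi> \<and> invertible (Minf f \<xi>)}"

definition charpoly :: "real^'p^'p \<Rightarrow> real poly" where
  "charpoly A = det (\<chi> i j. (if i = j then [:0, 1:] else 0) - [:A $ i $ j:])"

definition eigenvalues_sorted :: "real^'p^'p \<Rightarrow> real list" where
  "eigenvalues_sorted A = sorted_list_of_multiset (proots (charpoly A))"

definition phiD :: "('x::finite \<Rightarrow> real^'p::finite) \<Rightarrow> ('x \<Rightarrow> real) \<Rightarrow> real" where
  "phiD f \<xi> = det (Minf f \<xi>) powr (1 / real CARD('p))"

definition phiA :: "('x::finite \<Rightarrow> real^'p) \<Rightarrow> ('x \<Rightarrow> real) \<Rightarrow> real" where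
  "phiA f \<xi> = 1 / trace (matrix_inv (Minf f \<xi>))"

definition phiE :: "('x::finite \<Rightarrow> real^'p) \<Rightarrow> nat \<Rightarrow> ('x \<Rightarrow> real) \<Rightarrow> real" where
  "phiE f k \<xi> = sum_list (take k (eigenvalues_sorted (Minf f \<xi>)))"

definition HD :: "('x::finite \<Rightarrow> real^'p::finite) \<Rightarrow> ('x \<Rightarrow> real) \<Rightarrow> 'x \<Rightarrow> real" where
  "HD f \<mu> x = det (Minf f \<mu>) powr (1 / real CARD('p)) / real CARD('p)
      * (f x \<bullet> (matrix_inv (Minf f \<mu>) *v f x))"

definition HA :: "('x::finite \<Rightarrow> real^'p) \<Rightarrow> ('x \<Rightarrow> real) \<Rightarrow> 'x \<Rightarrow> real" where
  "HA f \<mu> x = (norm (matrix_inv (Minf f \<mu>) *v f x))\<^sup>2 / (trace (matrix_inv (Minf f \<mu>)))\<^sup>2"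

definition ordered_eigenbasis :: "real^'p::finite^'p \<Rightarrow> (nat \<Rightarrow> real^'p) \<Rightarrow> bool" where
  "ordered_eigenbasis A u \<longleftrightarrow>
     (\<forall>i<CARD('p). \<forall>j<CARD('p). u i \<bullet> u j = (if i = j then 1 else 0)) \<and>
     (\<exists>lam::nat \<Rightarrow> real. (\<forall>i<CARD('p). A *v u i = lam i *\<^sub>R u i) \<and>
        (\<forall>i j. i \<le> j \<longrightarrow> j < CARD('p) \<longrightarrow> lam i \<le> lam j))"

definition Pk :: "(nat \<Rightarrow> real^'p) \<Rightarrow> nat \<Rightarrow> real^'p^'p" where
  "Pk u k = (\<Sum>i<k. outer (u i) (u i))"

text \<open>H_{E_k}(mu,x) = ||P^(k)(mu) f(x)||^2, where u is the chosen eigenbasis of M(mu).\<close>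
definition HE :: "('x \<Rightarrow> real^'p) \<Rightarrow> (nat \<Rightarrow> real^'p) \<Rightarrow> nat \<Rightarrow> 'x \<Rightarrow> real" where
  "HE f u k x = (norm (Pk u k *v f x))\<^sup>2"

definition lp_feasible :: "(('x::finite \<Rightarrow> real) \<Rightarrow> 'x \<Rightarrow> real) \<Rightarrow> ('x \<Rightarrow> real) set
    \<Rightarrow> ('x \<Rightarrow> real) \<Rightarrow> real \<Rightarrow> bool" where
  "lp_feasible H Xi' \<xi> t \<longleftrightarrow> design \<xi> \<and> (\<forall>\<mu>\<in>Xi'. (\<Sum>x\<in>UNIV. H \<mu> x * \<xi> x) \<ge> t)"

definition lp_optimal :: "(('x::finite \<Rightarrow> real) \<Rightarrow> 'x \<Rightarrow> real) \<Rightarrow> ('x \<Rightarrow> real) set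
    \<Rightarrow> ('x \<Rightarrow> real) \<Rightarrow> real \<Rightarrow> bool" where
  "lp_optimal H Xi' \<xi> t \<longleftrightarrow> lp_feasible H Xi' \<xi> t \<and> (\<forall>\<eta> s. lp_feasible H Xi' \<eta> s \<longrightarrow> s \<le> t)"

end

theory Submission
  imports Defs "HOL-Combinatorics.List_Permutation"
begin

text \<open>For \<mu> and \<xi> in \<Xi>*, the function H(\<mu>, -) bounds the criterion from above:
  \<phi>(\<xi>) \<le> \<Sum>x H(\<mu>,x) \<xi>(x). For \<phi>_D this is AM-GM for the eigenvalues of
  M(\<mu>)^(-1/2) M(\<xi>) M(\<mu>)^(-1/2); for \<phi>_A it is Cauchy-Schwarz in an eigenbasis of M(\<xi>);
  for \<phi>_E_k it is Ky Fan's principle that the k smallest eigenvalues of M(\<xi>) sum to at most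
  \<Sum>i<k u_i^T M(\<xi>) u_i for any orthonormal u_1, ..., u_k. Consequently every \<xi> in \<Xi>*
  is, with t = \<phi>(\<xi>), feasible for the linear program, so \<phi>(\<xi>) \<le> t'. All three bounds rest
  on the spectral theorem for symmetric matrices, proved by minimising the quadratic form on the
  unit sphere of an invariant subspace.\<close>

lemma matrix_vector_mult_inner_transpose:
  "((A::real^'n^'m) *v x) \<bullet> y = x \<bullet> (transpose A *v y)"
  by (metis dot_lmul_matrix inner_commute transpose_matrix_vector)

lemma symmetric_matrix_inner:
  "transpose A = A \<Longrightarrow> ((A::real^'n^'n) *v x) \<bullet> y = x \<bullet> (A *v y)"
  by (metis matrix_vector_mult_inner_transpose)

lemma matrix_vector_mult_sum_scaleR:
  "(M::real^'n^'m) *v (\<Sum>i\<in>I. c i *\<^sub>R w i) = (\<Sum>i\<in>I. c i *\<^sub>R (M *v w i))"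
  using linear_sum[OF matrix_vector_mul_linear, of M "\<lambda>i. c i *\<^sub>R w i" I]
  by (simp add: matrix_vector_mult_scaleR)

lemma congruence_matrix_nth:
  "((\<chi> i. w i) ** (M::real^'n^'n) ** transpose (\<chi> i. w i)) $ i $ j = w i \<bullet> (M *v w j)"
  by (simp add: matrix_matrix_mult_def transpose_def inner_vec_def matrix_vector_mult_def
      sum_distrib_left sum_distrib_right mult_ac)
    (rule sum.swap)

lemma matrix_inv_mult_cancel:
  assumes "invertible (A::real^'n^'n)"
  shows "A ** matrix_inv A = mat 1" "matrix_inv A ** A = mat 1"
proof -
  have "A ** matrix_inv A = mat 1 \<and> matrix_inv A ** A = mat 1"
    using assms unfolding invertible_def matrix_inv_def by (rule someI_ex)
  then show "A ** matrix_inv A = mat 1" "matrix_inv A ** A = mat 1" by auto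
qed

lemma matrix_inv_mult_vector_cancel:
  assumes "invertible (A::real^'n^'n)"
  shows "matrix_inv A *v (A *v y) = y" "A *v (matrix_inv A *v y) = y"
  by (simp_all add: matrix_vector_mul_assoc matrix_inv_mult_cancel[OF assms])

lemma matrix_inv_eigenvector:
  assumes "invertible (M::real^'n^'n)" "M *v w = a *\<^sub>R w" "a \<noteq> 0"
  shows "matrix_inv M *v w = (1 / a) *\<^sub>R w"
proof -
  have "w = a *\<^sub>R (matrix_inv M *v w)"
    using matrix_inv_mult_vector_cancel(1)[OF assms(1), of w]
    by (simp add: assms(2) matrix_vector_mult_scaleR)
  then have "(1 / a) *\<^sub>R w = (1 / a) *\<^sub>R (a *\<^sub>R (matrix_inv M *v w))" by simp
  then show ?thesis using assms(3) by simp
qed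

definition orthonormal_basis :: "('n::finite \<Rightarrow> real^'n) \<Rightarrow> bool" where
  "orthonormal_basis v \<longleftrightarrow> (\<forall>i j. v i \<bullet> v j = (if i = j then 1 else 0))"

lemma orthonormal_basis_orthogonal_matrix:
  "orthonormal_basis v \<Longrightarrow> orthogonal_matrix (\<chi> i. v i)"
  by (auto simp: orthonormal_basis_def orthogonal_matrix_orthonormal_rows row_def
      norm_eq_1 orthogonal_def)

lemma orthonormal_basis_expansion:
  fixes v :: "'n::finite \<Rightarrow> real^'n"
  assumes "orthonormal_basis v"
  shows "y = (\<Sum>i\<in>UNIV. (v i \<bullet> y) *\<^sub>R v i)"
proof -
  let ?V = "(\<chi> i. v i) :: real^'n^'n"
  have "y = transpose ?V *v (?V *v y)"
    using orthonormal_basis_orthogonal_matrix[OF assms]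
    by (simp add: orthogonal_matrix_def matrix_vector_mul_assoc)
  also have "\<dots> = (\<Sum>i\<in>UNIV. (v i \<bullet> y) *\<^sub>R v i)"
    by (simp add: vec_eq_iff matrix_vector_mult_def transpose_def inner_vec_def
        sum_component mult.commute)
  finally show ?thesis .
qed

lemma orthonormal_basis_inner:
  fixes v :: "'n::finite \<Rightarrow> real^'n"
  shows "orthonormal_basis v \<Longrightarrow> x \<bullet> y = (\<Sum>i\<in>UNIV. (v i \<bullet> x) * (v i \<bullet> y))"
  by (subst orthonormal_basis_expansion[of v x]) (simp_all add: inner_sum_left)

lemma orthonormal_basis_mult_vector:
  fixes v :: "'n::finite \<Rightarrow> real^'n" and M :: "real^'n^'m"
  shows "orthonormal_basis v \<Longrightarrow> M *v y = (\<Sum>i\<in>UNIV. (v i \<bullet> y) *\<^sub>R (M *v v i))"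
  by (subst orthonormal_basis_expansion[of v y]) (simp_all add: matrix_vector_mult_sum_scaleR)

lemma orthonormal_basis_nonzero: "orthonormal_basis v \<Longrightarrow> v i \<noteq> 0"
  by (metis orthonormal_basis_def inner_zero_left zero_neq_one)

lemma orthonormal_basis_eigenvalue:
  "orthonormal_basis v \<Longrightarrow> M *v v i = m *\<^sub>R v i \<Longrightarrow> m = v i \<bullet> (M *v v i)"
  by (simp add: orthonormal_basis_def)

lemma quadratic_form_eigenbasis:
  fixes v :: "'n::finite \<Rightarrow> real^'n"
  assumes "orthonormal_basis v" "\<And>i. A *v v i = l i *\<^sub>R v i"
  shows "y \<bullet> (A *v y) = (\<Sum>i\<in>UNIV. l i * (v i \<bullet> y)\<^sup>2)"
  unfolding orthonormal_basis_mult_vector[OF assms(1), of A y]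
  by (simp add: assms(2) inner_sum_right power2_eq_square inner_commute mult_ac)

lemma trace_orthonormal_basis:
  fixes v :: "'n::finite \<Rightarrow> real^'n"
  assumes "orthonormal_basis v"
  shows "trace M = (\<Sum>i\<in>UNIV. v i \<bullet> (M *v v i))"
proof -
  let ?V = "(\<chi> i. v i) :: real^'n^'n"
  have "trace M = trace ((transpose ?V ** ?V) ** M)"
    using orthonormal_basis_orthogonal_matrix[OF assms] by (simp add: orthogonal_matrix_def)
  also have "\<dots> = trace (?V ** M ** transpose ?V)"
    by (metis matrix_mul_assoc trace_mul_sym)
  also have "\<dots> = (\<Sum>i\<in>UNIV. v i \<bullet> (M *v v i))"
    by (simp add: trace_def congruence_matrix_nth)
  finally show ?thesis .
qed

lemma det_eigenbasis:
  fixes v :: "'n::finite \<Rightarrow> real^'n"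
  assumes "orthonormal_basis v" and eig: "\<And>i. M *v v i = m i *\<^sub>R v i"
  shows "det M = (\<Prod>i\<in>UNIV. m i)"
proof -
  let ?V = "(\<chi> i. v i) :: real^'n^'n"
  have "det ?V * det (transpose ?V) = 1"
    using orthonormal_basis_orthogonal_matrix[OF assms(1)]
    by (metis det_I det_mul orthogonal_matrix_def)
  moreover have "det (?V ** M ** transpose ?V) = (\<Prod>i\<in>UNIV. m i)"
    using assms(1)
    by (subst det_diagonal) (auto simp: congruence_matrix_nth eig orthonormal_basis_def)
  ultimately show ?thesis by (simp add: det_mul algebra_simps)
qed

lemma poly_det: "poly (det (M :: real poly^'n^'n)) x = det (\<chi> i j. poly (M $ i $ j) x)"
  unfolding det_def by (simp add: poly_sum poly_prod)

lemma charpoly_eigenbasis: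
  fixes v :: "'n::finite \<Rightarrow> real^'n"
  assumes "orthonormal_basis v" and eig: "\<And>i. A *v v i = m i *\<^sub>R v i"
  shows "charpoly A = (\<Prod>i\<in>UNIV. [:- m i, 1:])"
proof (rule poly_eq_poly_eq_iff[THEN iffD1], rule ext)
  fix x
  have "poly (charpoly A) x = det (x *\<^sub>R mat 1 - A)"
    unfolding charpoly_def poly_det by (rule arg_cong[of _ _ det]) (simp add: vec_eq_iff mat_def)
  also have "\<dots> = (\<Prod>i\<in>UNIV. x - m i)"
    by (rule det_eigenbasis[OF assms(1)])
      (simp add: matrix_vector_mult_diff_rdistrib eig algebra_simps
        scaleR_matrix_vector_assoc[symmetric])
  finally show "poly (charpoly A) x = poly (\<Prod>i\<in>UNIV. [:- m i, 1:]) x"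
    by (simp add: poly_prod)
qed

lemma proots_charpoly_eigenbasis:
  fixes v :: "'n::finite \<Rightarrow> real^'n"
  assumes "orthonormal_basis v" and "\<And>i. A *v v i = m i *\<^sub>R v i"
  shows "proots (charpoly A) = (\<Sum>i\<in>UNIV. {# m i #})"
  unfolding charpoly_eigenbasis[OF assms]
  by (subst proots_prod) (auto simp: proots_linear_factor)

section \<open>The spectral theorem for symmetric matrices\<close>

lemma quadratic_form_add_scaleR:
  fixes A :: "real^'n^'n"
  assumes "transpose A = A"
  shows "(v + t *\<^sub>R w) \<bullet> (A *v (v + t *\<^sub>R w)) =
     v \<bullet> (A *v v) + 2 * t * (v \<bullet> (A *v w)) + t\<^sup>2 * (w \<bullet> (A *v w))"
proof -
  have "w \<bullet> (A *v v) = v \<bullet> (A *v w)"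
    using symmetric_matrix_inner[OF assms, of w v] by (simp add: inner_commute)
  then show ?thesis
    by (simp add: matrix_vector_right_distrib matrix_vector_mult_scaleR inner_add_left
        inner_add_right power2_eq_square algebra_simps)
qed

lemma nonneg_quadratic_linear_coeff_zero:
  fixes c d :: real
  assumes "\<And>t. 0 \<le> 2 * t * c + t\<^sup>2 * d"
  shows "c = 0"
proof (rule ccontr)
  assume "c \<noteq> 0"
  define D where "D = \<bar>d\<bar> + 1"
  have "D > 0" unfolding D_def by simp
  then have "2 * (- c / D) * c + (- c / D)\<^sup>2 * d = (c\<^sup>2 / D\<^sup>2) * (d - 2 * D)"
    by (simp add: field_simps power2_eq_square)
  also have "\<dots> < 0"
    using \<open>c \<noteq> 0\<close> \<open>D > 0\<close> by (intro mult_pos_neg) (auto simp: D_def)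
  finally show False using assms[of "- c / D"] by linarith
qed

text \<open>Minimality makes the first variation of the quadratic form at v vanish along every
  direction of S orthogonal to v.\<close>
lemma quadratic_form_minimiser_eigenvector:
  fixes A :: "real^'n^'n"
  assumes sym: "transpose A = A" and S: "subspace S" "\<forall>x\<in>S. A *v x \<in> S"
    and v: "v \<in> S" "norm v = 1"
    and min: "\<forall>y\<in>S. norm y = 1 \<longrightarrow> v \<bullet> (A *v v) \<le> y \<bullet> (A *v y)"
  shows "A *v v = (v \<bullet> (A *v v)) *\<^sub>R v"
proof -
  define l where "l = v \<bullet> (A *v v)"
  have vv: "v \<bullet> v = 1" using v(2) by (simp add: norm_eq_1)
  have ortho: "v \<bullet> (A *v w) = 0" if "w \<in> S" "v \<bullet> w = 0" for w
  proof (rule nonneg_quadratic_linear_coeff_zero)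
    fix t :: real
    define u where "u = v + t *\<^sub>R w"
    have "u \<in> S" unfolding u_def using v(1) that(1) S(1) by (simp add: subspace_add subspace_scale)
    have uu: "u \<bullet> u = 1 + t\<^sup>2 * (w \<bullet> w)"
      unfolding u_def using vv that(2)
      by (simp add: inner_add_left inner_add_right inner_commute power2_eq_square)
    then have "u \<bullet> u > 0" by (simp add: add_pos_nonneg)
    then have "norm u > 0" by simp
    then have "u /\<^sub>R norm u \<in> S" "norm (u /\<^sub>R norm u) = 1"
      using \<open>u \<in> S\<close> S(1) by (simp_all add: subspace_scale)
    then have "l \<le> (u /\<^sub>R norm u) \<bullet> (A *v (u /\<^sub>R norm u))"
      using min unfolding l_def by blast
    also have "\<dots> = (u \<bullet> (A *v u)) / (u \<bullet> u)"
      by (simp add: matrix_vector_mult_scaleR power2_eq_square power2_norm_eq_inner[symmetric]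
          divide_inverse)
    finally have "l * (u \<bullet> u) \<le> u \<bullet> (A *v u)"
      using \<open>u \<bullet> u > 0\<close> by (simp add: pos_le_divide_eq)
    moreover have "u \<bullet> (A *v u) = l + 2 * t * (v \<bullet> (A *v w)) + t\<^sup>2 * (w \<bullet> (A *v w))"
      unfolding u_def l_def by (rule quadratic_form_add_scaleR[OF sym])
    ultimately have
      "l * (1 + t\<^sup>2 * (w \<bullet> w)) \<le> l + 2 * t * (v \<bullet> (A *v w)) + t\<^sup>2 * (w \<bullet> (A *v w))"
      using uu by simp
    then show "0 \<le> 2 * t * (v \<bullet> (A *v w)) + t\<^sup>2 * (w \<bullet> (A *v w) - l * (w \<bullet> w))"
      by (simp add: algebra_simps)
  qed
  define r where "r = A *v v - l *\<^sub>R v"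
  have "r \<bullet> w = 0" if "w \<in> S" for w
  proof -
    define w' where "w' = w - (v \<bullet> w) *\<^sub>R v"
    have "w' \<in> S" "v \<bullet> w' = 0"
      unfolding w'_def using that v(1) S(1) vv by (simp_all add: subspace_diff subspace_scale inner_diff_right)
    then have "v \<bullet> (A *v w') = 0" by (rule ortho)
    then have "v \<bullet> (A *v w) = (v \<bullet> w) * l"
      unfolding w'_def l_def by (simp add: matrix_vector_mult_diff_distrib matrix_vector_mult_scaleR inner_diff_right)
    then show ?thesis
      unfolding r_def using symmetric_matrix_inner[OF sym, of v w] by (simp add: inner_diff_left)
  qed
  moreover have "r \<in> S" unfolding r_def using S v(1) by (simp add: subspace_diff subspace_scale)
  ultimately have "r = 0" by (metis inner_eq_zero_iff)
  then show ?thesis unfolding r_def l_def by simp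
qed

lemma invariant_subspace_eigenvector:
  fixes A :: "real^'n^'n"
  assumes "transpose A = A" "subspace S" "\<forall>x\<in>S. A *v x \<in> S" "z \<in> S" "z \<noteq> 0"
  obtains v l where "v \<in> S" "norm v = 1" "A *v v = l *\<^sub>R v"
proof -
  define K where "K = S \<inter> sphere 0 1"
  have "compact K"
    unfolding K_def using assms(2) by (intro closed_Int_compact closed_subspace compact_sphere)
  moreover have "z /\<^sub>R norm z \<in> K"
    unfolding K_def using assms(2,4,5) by (simp add: subspace_scale)
  moreover have "continuous_on K (\<lambda>y. y \<bullet> (A *v y))"
    by (intro continuous_on_inner continuous_on_id matrix_vector_mult_linear_continuous_on)
  ultimately obtain v where "v \<in> K" "\<forall>y\<in>K. v \<bullet> (A *v v) \<le> y \<bullet> (A *v y)"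
    using continuous_attains_inf by (metis empty_iff)
  then show ?thesis
    using that quadratic_form_minimiser_eigenvector[OF assms(1-3), of v] unfolding K_def by auto
qed

lemma invariant_subspace_orthonormal_eigenvectors:
  fixes A :: "real^'n^'n"
  assumes sym: "transpose A = A"
  shows "subspace S \<Longrightarrow> \<forall>x\<in>S. A *v x \<in> S \<Longrightarrow>
    \<exists>B\<subseteq>S. pairwise orthogonal B \<and> (\<forall>x\<in>B. norm x = 1) \<and>
        (\<forall>x\<in>B. \<exists>l. A *v x = l *\<^sub>R x) \<and> S \<subseteq> span B"
proof (induction "dim S" arbitrary: S rule: less_induct)
  case less
  show ?case
  proof (cases "S \<subseteq> {0}")
    case True
    then show ?thesis by (intro exI[of _ "{}"]) auto
  next
    case False
    then obtain z where "z \<in> S" "z \<noteq> 0" by auto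
    with less.prems obtain v l where v: "v \<in> S" "norm v = 1" "A *v v = l *\<^sub>R v"
      using invariant_subspace_eigenvector[OF sym] by metis
    have vv: "v \<bullet> v = 1" using v(2) by (simp add: norm_eq_1)
    define S' where "S' = {w \<in> S. v \<bullet> w = 0}"
    have S': "subspace S'"
      unfolding S'_def using less.prems(1) by (auto simp: subspace_def inner_add_right)
    have inv: "\<forall>x\<in>S'. A *v x \<in> S'"
    proof
      fix x assume "x \<in> S'"
      moreover have "v \<bullet> (A *v x) = l * (v \<bullet> x)"
        using symmetric_matrix_inner[OF sym, of v x] v(3) by simp
      ultimately show "A *v x \<in> S'" using less.prems(2) unfolding S'_def by auto
    qed
    have "dim S' < dim S"
    proof (rule dim_psubset)
      have "v \<notin> S'" using vv unfolding S'_def by auto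
      then have "S' \<subset> S" using v(1) unfolding S'_def by blast
      then show "span S' \<subset> span S"
        using S' less.prems(1) by (metis span_eq_iff)
    qed
    from less.hyps[OF this S' inv] obtain B where B: "B \<subseteq> S'" "pairwise orthogonal B"
      "\<forall>x\<in>B. norm x = 1" "\<forall>x\<in>B. \<exists>l. A *v x = l *\<^sub>R x" "S' \<subseteq> span B"
      by blast
    show ?thesis
    proof (intro exI[of _ "insert v B"] conjI)
      show "insert v B \<subseteq> S" using B(1) v(1) unfolding S'_def by blast
      show "\<forall>x\<in>insert v B. norm x = 1" using B(3) v(2) by blast
      show "\<forall>x\<in>insert v B. \<exists>l. A *v x = l *\<^sub>R x" using B(4) v(3) by blast
      have "orthogonal v y \<and> orthogonal y v" if "y \<in> B" for y
        using that B(1) unfolding S'_def orthogonal_def by (auto simp: inner_commute)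
      then show "pairwise orthogonal (insert v B)"
        using B(2) by (simp add: pairwise_insert)
      show "S \<subseteq> span (insert v B)"
      proof
        fix w assume "w \<in> S"
        then have "w - (v \<bullet> w) *\<^sub>R v \<in> S'"
          unfolding S'_def using v(1) less.prems(1) vv
          by (simp add: subspace_diff subspace_scale inner_diff_right)
        then have "w - (v \<bullet> w) *\<^sub>R v \<in> span (insert v B)"
          using B(5) span_mono[of B "insert v B"] by blast
        moreover have "(v \<bullet> w) *\<^sub>R v \<in> span (insert v B)" by (simp add: span_base span_mul)
        ultimately show "w \<in> span (insert v B)" by (metis span_add diff_add_cancel)
      qed
    qed
  qed
qed

theorem symmetric_matrix_eigenbasis:
  fixes A :: "real^'n^'n"
  assumes "transpose A = A"
  obtains v l where "orthonormal_basis v" "\<And>i. A *v v i = l i *\<^sub>R v i"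
proof -
  obtain B where B: "pairwise orthogonal B" "\<forall>x\<in>B. norm x = 1"
    "\<forall>x\<in>B. \<exists>l. A *v x = l *\<^sub>R x" "span B = UNIV"
    using invariant_subspace_orthonormal_eigenvectors[OF assms, of UNIV] by auto
  have "independent B"
    using B(1,2) pairwise_orthogonal_independent by (metis norm_zero zero_neq_one)
  then have "finite B" "card B = CARD('n)"
    using dim_span_eq_card_independent[of B] B(4) by (auto simp: dim_UNIV independent_bound)
  then obtain h where h: "bij_betw h (UNIV::'n set) B"
    using finite_same_card_bij[of "UNIV::'n set" B] by auto
  have "orthonormal_basis h"
    unfolding orthonormal_basis_def
  proof (intro allI)
    fix i j
    have "h i \<in> B" "h j \<in> B" "h i = h j \<longleftrightarrow> i = j"
      using h by (auto simp: bij_betw_def inj_on_def)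
    then show "h i \<bullet> h j = (if i = j then 1 else 0)"
      using B(1,2) unfolding pairwise_def orthogonal_def by (simp add: norm_eq_1)
  qed
  moreover have "\<forall>i. \<exists>l. A *v h i = l *\<^sub>R h i"
    using B(3) h by (auto simp: bij_betw_def)
  ultimately show ?thesis using that by metis
qed

lemma psd_matrix_eigenbasis:
  fixes C :: "real^'n^'n"
  assumes "transpose C = C" "\<And>y. 0 \<le> y \<bullet> (C *v y)"
  obtains z c where "orthonormal_basis z" "\<And>i. C *v z i = c i *\<^sub>R z i" "\<And>i. 0 \<le> c i"
proof -
  obtain z c where z: "orthonormal_basis z" and eig: "\<And>i. C *v z i = c i *\<^sub>R z i"
    using symmetric_matrix_eigenbasis[OF assms(1)] by blast
  moreover have "0 \<le> c i" for i
    using assms(2)[of "z i"] orthonormal_basis_eigenvalue[OF z eig] by simp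
  ultimately show ?thesis using that by blast
qed

lemma psd_det_nonneg:
  fixes C :: "real^'n^'n"
  assumes "transpose C = C" "\<And>y. 0 \<le> y \<bullet> (C *v y)"
  shows "0 \<le> det C"
proof -
  obtain z c where z: "orthonormal_basis z" "\<And>i. C *v z i = c i *\<^sub>R z i" "\<And>i. 0 \<le> c i"
    using psd_matrix_eigenbasis[OF assms] by blast
  then show ?thesis by (simp add: det_eigenbasis[OF z(1,2)] prod_nonneg)
qed

lemma psd_det_root_le_mean_trace:
  fixes C :: "real^'n^'n"
  assumes "transpose C = C" "\<And>y. 0 \<le> y \<bullet> (C *v y)"
  shows "det C powr (1 / CARD('n)) \<le> trace C / CARD('n)"
proof -
  obtain z c where z: "orthonormal_basis z" "\<And>i. C *v z i = c i *\<^sub>R z i" "\<And>i. 0 \<le> c i"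
    using psd_matrix_eigenbasis[OF assms] by blast
  have "trace C = (\<Sum>i\<in>UNIV. c i)"
    using orthonormal_basis_eigenvalue[OF z(1,2)] by (simp add: trace_orthonormal_basis[OF z(1)])
  then show ?thesis
    using arith_geom_mean[of UNIV c] z(3) by (simp add: det_eigenbasis[OF z(1,2)] sum_divide_distrib)
qed

section \<open>Ky Fan's minimum principle\<close>

abbreviation orthonormal_upto :: "nat \<Rightarrow> (nat \<Rightarrow> real^'n) \<Rightarrow> bool" where
  "orthonormal_upto k u \<equiv> \<forall>i<k. \<forall>j<k. u i \<bullet> u j = (if i = j then 1 else 0)"

lemma inner_orthonormal_combination:
  assumes "orthonormal_upto k u" "j < k"
  shows "(\<Sum>i<k. c i *\<^sub>R u i) \<bullet> u j = c j"
proof -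
  have "(\<Sum>i<k. c i *\<^sub>R u i) \<bullet> u j = (\<Sum>i<k. c i * (if i = j then 1 else 0))"
    using assms(1,2) by (simp add: inner_sum_left)
  also have "\<dots> = c j" using assms(2) by (simp add: if_distrib[of "\<lambda>t. _ * t"] cong: if_cong)
  finally show ?thesis .
qed

lemma inner_self_orthonormal_combination:
  "orthonormal_upto k u \<Longrightarrow>
    (\<Sum>i<k. c i *\<^sub>R u i) \<bullet> (\<Sum>i<k. c i *\<^sub>R u i) = (\<Sum>i<k. (c i)\<^sup>2)"
  by (simp add: inner_sum_right inner_orthonormal_combination power2_eq_square)

lemma bessel_inequality:
  assumes "orthonormal_upto k u"
  shows "(\<Sum>i<k. (u i \<bullet> y)\<^sup>2) \<le> y \<bullet> y"
proof -
  define s where "s = (\<Sum>i<k. (u i \<bullet> y) *\<^sub>R u i)"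
  have ss: "s \<bullet> s = (\<Sum>i<k. (u i \<bullet> y)\<^sup>2)"
    unfolding s_def by (rule inner_self_orthonormal_combination[OF assms])
  have ys: "y \<bullet> s = (\<Sum>i<k. (u i \<bullet> y)\<^sup>2)"
    unfolding s_def by (simp add: inner_sum_right power2_eq_square inner_commute)
  have "0 \<le> (y - s) \<bullet> (y - s)" by simp
  also have "\<dots> = y \<bullet> y - 2 * (y \<bullet> s) + s \<bullet> s"
    by (simp add: inner_diff_left inner_diff_right inner_commute)
  finally show ?thesis using ss ys by simp
qed

text \<open>The combinatorial core of Ky Fan's principle; the weights c_j are the squared lengths of
  the projections of the eigenvectors onto span(u_1, ..., u_k).\<close>
lemma sum_prefix_le_weighted_sum:
  fixes \<beta> c :: "nat \<Rightarrow> real"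
  assumes sorted: "\<And>i j. i \<le> j \<Longrightarrow> j < p \<Longrightarrow> \<beta> i \<le> \<beta> j"
    and c: "\<And>j. j < p \<Longrightarrow> 0 \<le> c j \<and> c j \<le> 1"
    and csum: "(\<Sum>j<p. c j) = real k" and "k \<le> p"
  shows "(\<Sum>j<k. \<beta> j) \<le> (\<Sum>j<p. \<beta> j * c j)"
proof -
  define m where "m = \<beta> (k - 1)"
  have split: "{..<p} = {..<k} \<union> {k..<p}" "{..<k} \<inter> {k..<p} = {}"
    using \<open>k \<le> p\<close> by auto
  have "(\<Sum>j<p. \<beta> j * c j) - (\<Sum>j<k. \<beta> j) =
        (\<Sum>j<k. \<beta> j * (c j - 1)) + (\<Sum>j\<in>{k..<p}. \<beta> j * c j)"
    unfolding split(1) by (simp add: sum.union_disjoint split(2) algebra_simps sum_subtractf)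
  also have "\<dots> \<ge> (\<Sum>j<k. m * (c j - 1)) + (\<Sum>j\<in>{k..<p}. m * c j)"
  proof (rule add_mono; rule sum_mono)
    fix j assume "j \<in> {..<k}"
    then have "\<beta> j \<le> m" "c j \<le> 1"
      using sorted[of j "k - 1"] c[of j] \<open>k \<le> p\<close> by (auto simp: m_def)
    then show "m * (c j - 1) \<le> \<beta> j * (c j - 1)" by (simp add: mult_right_mono_neg)
  next
    fix j assume "j \<in> {k..<p}"
    then have "m \<le> \<beta> j" "0 \<le> c j" using sorted[of "k - 1" j] c[of j] by (auto simp: m_def)
    then show "m * c j \<le> \<beta> j * c j" by (simp add: mult_right_mono)
  qed
  also have "(\<Sum>j<k. m * (c j - 1)) + (\<Sum>j\<in>{k..<p}. m * c j) = m * ((\<Sum>j<p. c j) - k)"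
    unfolding split(1)
    by (simp add: sum.union_disjoint split(2) algebra_simps sum_subtractf sum_distrib_left)
  also have "\<dots> = 0" using csum by simp
  finally show ?thesis by simp
qed

lemma image_mset_mset_set_sum: "finite A \<Longrightarrow> image_mset l (mset_set A) = (\<Sum>i\<in>A. {# l i #})"
  by (induction A rule: finite_induct) auto

text \<open>eigenvalues_sorted is defined through the roots of the characteristic polynomial, which
  are the eigenvalues of any orthonormal eigenbasis; the basis is re-indexed to match their order.\<close>
lemma sorted_eigenbasis:
  fixes A :: "real^'n^'n"
  defines "L \<equiv> eigenvalues_sorted A"
  assumes "transpose A = A"
  obtains w where "orthonormal_upto CARD('n) w" "length L = CARD('n)"
    "\<And>y. y \<bullet> (A *v y) = (\<Sum>j<CARD('n). L ! j * (w j \<bullet> y)\<^sup>2)"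
    "\<And>y. y \<bullet> y = (\<Sum>j<CARD('n). (w j \<bullet> y)\<^sup>2)"
proof -
  define p where "p = CARD('n)"
  obtain v l where v: "orthonormal_basis v" and eig: "\<And>i. A *v v i = l i *\<^sub>R v i"
    using symmetric_matrix_eigenbasis[OF assms(2)] by blast
  obtain g where g: "bij_betw g {..<p} (UNIV::'n set)"
    using ex_bij_betw_nat_finite[of "UNIV::'n set"] by (auto simp: p_def atLeast0LessThan)
  define ys where "ys = map (l \<circ> g) [0..<p]"
  have "mset ys = image_mset l (image_mset g (mset_set {..<p}))"
    unfolding ys_def by (simp add: mset_upt multiset.map_comp atLeast0LessThan)
  also have "\<dots> = proots (charpoly A)"
    using g by (simp add: image_mset_mset_set bij_betw_def image_mset_mset_set_sum
        proots_charpoly_eigenbasis[OF v eig])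
  finally have L: "L = sort ys"
    unfolding L_def eigenvalues_sorted_def by (metis sorted_list_of_multiset_mset)
  then have len: "length L = p" "length ys = p" by (simp_all add: ys_def)
  obtain \<pi> where \<pi>: "bij_betw \<pi> {..<p} {..<p}" "\<forall>i<p. L ! i = ys ! \<pi> i"
    using permutation_Ex_bij[of L ys] len L by auto
  define h where "h = g \<circ> \<pi>"
  have h: "bij_betw h {..<p} UNIV" unfolding h_def using bij_betw_trans[OF \<pi>(1) g] .
  have L_h: "L ! j = l (h j)" if "j < p" for j
  proof -
    have "\<pi> j < p" using \<pi>(1) that by (auto simp: bij_betw_def)
    then show ?thesis using \<pi>(2) that by (simp add: ys_def h_def)
  qed
  have reindex: "(\<Sum>i\<in>UNIV. F i) = (\<Sum>j<p. F (h j))" for F :: "'n \<Rightarrow> real"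
    using sum.reindex_bij_betw[OF h, of F] by simp
  show ?thesis
  proof (rule that[of "v \<circ> h"])
    show "orthonormal_upto CARD('n) (v \<circ> h)"
      using v h unfolding orthonormal_basis_def bij_betw_def inj_on_def p_def by auto
    show "length L = CARD('n)" using len by (simp add: p_def)
    show "y \<bullet> (A *v y) = (\<Sum>j<CARD('n). L ! j * ((v \<circ> h) j \<bullet> y)\<^sup>2)" for y
    proof -
      have "y \<bullet> (A *v y) = (\<Sum>i\<in>UNIV. l i * (v i \<bullet> y)\<^sup>2)"
        by (rule quadratic_form_eigenbasis[OF v eig])
      then show ?thesis unfolding reindex p_def[symmetric] by (simp add: L_h)
    qed
    show "y \<bullet> y = (\<Sum>j<CARD('n). ((v \<circ> h) j \<bullet> y)\<^sup>2)" for y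
      unfolding orthonormal_basis_inner[OF v, of y y] reindex p_def[symmetric]
      by (simp add: power2_eq_square)
  qed
qed

theorem ky_fan_minimum_principle:
  fixes A :: "real^'n^'n"
  assumes "transpose A = A" "k \<le> CARD('n)" "orthonormal_upto k u"
  shows "sum_list (take k (eigenvalues_sorted A)) \<le> (\<Sum>i<k. u i \<bullet> (A *v u i))"
proof -
  define L where "L = eigenvalues_sorted A"
  define p where "p = CARD('n)"
  obtain w where w: "orthonormal_upto p w" "length L = p"
    "\<And>y. y \<bullet> (A *v y) = (\<Sum>j<p. L ! j * (w j \<bullet> y)\<^sup>2)"
    "\<And>y. y \<bullet> y = (\<Sum>j<p. (w j \<bullet> y)\<^sup>2)"
    using sorted_eigenbasis[OF assms(1)] unfolding L_def p_def by blast
  define c where "c j = (\<Sum>i<k. (u i \<bullet> w j)\<^sup>2)" for j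
  have "(\<Sum>i<k. u i \<bullet> (A *v u i)) = (\<Sum>j<p. L ! j * c j)"
    unfolding w(3) c_def by (subst sum.swap) (simp add: sum_distrib_left inner_commute)
  moreover have "sum_list (take k L) = (\<Sum>j<k. L ! j)"
    using assms(2) w(2) by (simp add: sum_list_sum_nth min_def atLeast0LessThan p_def)
  moreover have "(\<Sum>j<k. L ! j) \<le> (\<Sum>j<p. L ! j * c j)"
  proof (rule sum_prefix_le_weighted_sum)
    show "L ! i \<le> L ! j" if "i \<le> j" "j < p" for i j
      using that w(2) sorted_nth_mono[of L] by (simp add: L_def eigenvalues_sorted_def)
    show "0 \<le> c j \<and> c j \<le> 1" if "j < p" for j
      using bessel_inequality[OF assms(3), of "w j"] w(1) that by (simp add: c_def sum_nonneg)
    have "(\<Sum>j<p. c j) = (\<Sum>i<k. u i \<bullet> u i)"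
      unfolding c_def w(4) by (subst sum.swap) (simp add: inner_commute)
    then show "(\<Sum>j<p. c j) = real k" using assms(3) by simp
    show "k \<le> p" using assms(2) by (simp add: p_def)
  qed
  ultimately show ?thesis by (simp add: L_def)
qed

lemma Minf_mult_vector: "Minf f \<xi> *v y = (\<Sum>x\<in>UNIV. (\<xi> x * (f x \<bullet> y)) *\<^sub>R f x)"
  unfolding Minf_def outer_def
  by (simp add: vec_eq_iff matrix_vector_mult_def inner_vec_def sum_component
      sum_distrib_left sum_distrib_right mult_ac, subst sum.swap, simp add: mult_ac)

lemma transpose_Minf: "transpose (Minf f \<xi>) = Minf f \<xi>"
  unfolding Minf_def outer_def by (simp add: vec_eq_iff transpose_def sum_component mult_ac)

lemma Minf_quadratic_form: "y \<bullet> (Minf f \<xi> *v y) = (\<Sum>x\<in>UNIV. \<xi> x * (f x \<bullet> y)\<^sup>2)"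
  unfolding Minf_mult_vector
  by (simp add: inner_sum_right power2_eq_square inner_commute mult_ac)

lemma Minf_quadratic_form_nonneg: "design \<xi> \<Longrightarrow> 0 \<le> y \<bullet> (Minf f \<xi> *v y)"
  unfolding Minf_quadratic_form design_def by (simp add: sum_nonneg)

lemma Minf_positive_definite:
  assumes "design \<xi>" "invertible (Minf f \<xi>)" "y \<noteq> 0"
  shows "y \<bullet> (Minf f \<xi> *v y) > 0"
proof (rule ccontr)
  assume "\<not> ?thesis"
  then have "(\<Sum>x\<in>UNIV. \<xi> x * (f x \<bullet> y)\<^sup>2) = 0"
    using Minf_quadratic_form_nonneg[OF assms(1), of y f] by (simp add: Minf_quadratic_form)
  then have zero: "\<xi> x * (f x \<bullet> y) = 0" for x
    using assms(1) by (simp add: sum_nonneg_eq_0_iff design_def power2_eq_square)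
  have "Minf f \<xi> *v y = 0" unfolding Minf_mult_vector zero by simp
  then show False
    using matrix_inv_mult_vector_cancel(1)[OF assms(2), of y] assms(3) by simp
qed

lemma matrix_inv_Minf_positive_definite:
  assumes "design \<mu>" "invertible (Minf f \<mu>)" "y \<noteq> 0"
  shows "y \<bullet> (matrix_inv (Minf f \<mu>) *v y) > 0"
proof -
  define z where "z = matrix_inv (Minf f \<mu>) *v y"
  have y: "y = Minf f \<mu> *v z"
    unfolding z_def using matrix_inv_mult_vector_cancel(2)[OF assms(2)] by simp
  with assms(3) have "z \<noteq> 0" by auto
  then have "0 < z \<bullet> (Minf f \<mu> *v z)" by (rule Minf_positive_definite[OF assms(1,2)])
  then show ?thesis unfolding z_def[symmetric] using y by (simp add: inner_commute)
qed

lemma Pk_mult_vector: "Pk u k *v y = (\<Sum>i<k. (u i \<bullet> y) *\<^sub>R u i)"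
  unfolding Pk_def outer_def
  by (simp add: vec_eq_iff matrix_vector_mult_def inner_vec_def sum_component
      sum_distrib_left sum_distrib_right, subst sum.swap, simp add: mult_ac)

lemma HE_weighted_sum:
  assumes "orthonormal_upto k u"
  shows "(\<Sum>x\<in>UNIV. HE f u k x * \<xi> x) = (\<Sum>i<k. u i \<bullet> (Minf f \<xi> *v u i))"
proof -
  have "(\<Sum>x\<in>UNIV. HE f u k x * \<xi> x) = (\<Sum>x\<in>UNIV. \<Sum>i<k. \<xi> x * (f x \<bullet> u i)\<^sup>2)"
    unfolding HE_def Pk_mult_vector power2_norm_eq_inner inner_self_orthonormal_combination[OF assms]
    by (simp add: sum_distrib_left inner_commute mult_ac)
  also have "\<dots> = (\<Sum>i<k. u i \<bullet> (Minf f \<xi> *v u i))"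
    by (subst sum.swap) (simp add: Minf_quadratic_form)
  finally show ?thesis .
qed

section \<open>Upper bounds on the criteria\<close>

lemma phiE_le_HE:
  fixes f :: "'x::finite \<Rightarrow> real^'n"
  assumes "k \<le> CARD('n)" "orthonormal_upto k u"
  shows "phiE f k \<xi> \<le> (\<Sum>x\<in>UNIV. HE f u k x * \<xi> x)"
  unfolding phiE_def HE_weighted_sum[OF assms(2)]
  by (rule ky_fan_minimum_principle[OF transpose_Minf assms])

lemma phiA_le_HA:
  fixes f :: "'x::finite \<Rightarrow> real^'n"
  assumes \<xi>: "design \<xi>" "invertible (Minf f \<xi>)" and \<mu>: "design \<mu>" "invertible (Minf f \<mu>)"
  shows "phiA f \<xi> \<le> (\<Sum>x\<in>UNIV. HA f \<mu> x * \<xi> x)"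
proof -
  define B where "B = Minf f \<xi>"
  define P where "P = matrix_inv (Minf f \<mu>)"
  obtain v b where v: "orthonormal_basis v" and eig: "\<And>i. B *v v i = b i *\<^sub>R v i"
    using symmetric_matrix_eigenbasis[OF transpose_Minf[of f \<xi>, folded B_def]] by blast
  have b: "b i > 0" for i
    using Minf_positive_definite[OF \<xi> orthonormal_basis_nonzero[OF v]]
      orthonormal_basis_eigenvalue[OF v eig] by (simp add: B_def)
  define a where "a i = v i \<bullet> (P *v v i)" for i
  have a: "a i > 0" for i
    unfolding a_def P_def by (rule matrix_inv_Minf_positive_definite[OF \<mu> orthonormal_basis_nonzero[OF v]])
  define S where "S = (\<Sum>x\<in>UNIV. \<xi> x * (norm (P *v f x))\<^sup>2)"
  have trace_inv_B: "trace (matrix_inv B) = (\<Sum>i\<in>UNIV. 1 / b i)"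
    using matrix_inv_eigenvector[OF \<xi>(2)[folded B_def] eig] b v
    by (simp add: trace_orthonormal_basis[OF v] orthonormal_basis_def less_imp_neq[symmetric])
  have trace_P: "trace P = (\<Sum>i\<in>UNIV. a i)"
    unfolding a_def by (rule trace_orthonormal_basis[OF v])
  have "(\<Sum>j\<in>UNIV. b j * (a j)\<^sup>2) \<le> S"
  proof -
    define q where "q j = transpose P *v v j" for j
    have "S = (\<Sum>x\<in>UNIV. \<Sum>j\<in>UNIV. \<xi> x * (f x \<bullet> q j)\<^sup>2)"
      unfolding S_def power2_norm_eq_inner orthonormal_basis_inner[OF v, of "P *v f x" for x] q_def
      by (simp add: sum_distrib_left inner_commute[of "v _"] matrix_vector_mult_inner_transpose
          power2_eq_square)
    also have "\<dots> = (\<Sum>j\<in>UNIV. q j \<bullet> (B *v q j))"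
      by (subst sum.swap) (simp add: Minf_quadratic_form B_def)
    also have "\<dots> = (\<Sum>j\<in>UNIV. \<Sum>l\<in>UNIV. b l * (v l \<bullet> q j)\<^sup>2)"
      by (simp add: quadratic_form_eigenbasis[OF v eig])
    finally have S: "S = \<dots>" .
    have "v j \<bullet> q j = a j" for j
      unfolding q_def a_def by (metis matrix_vector_mult_inner_transpose inner_commute)
    then have "b j * (a j)\<^sup>2 \<le> (\<Sum>l\<in>UNIV. b l * (v l \<bullet> q j)\<^sup>2)" for j
      using b by (metis (no_types, lifting) UNIV_I finite_class.finite_UNIV less_imp_le
          member_le_sum mult_nonneg_nonneg zero_le_power2)
    then show ?thesis unfolding S by (rule sum_mono)
  qed
  moreover have "(trace P)\<^sup>2 \<le> (\<Sum>j\<in>UNIV. b j * (a j)\<^sup>2) * trace (matrix_inv B)"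
  proof -
    have "trace P = (\<Sum>j\<in>UNIV. (sqrt (b j) * a j) * (1 / sqrt (b j)))"
      unfolding trace_P using b by (intro sum.cong) (auto simp: less_imp_neq[symmetric])
    then have "(trace P)\<^sup>2
        \<le> (\<Sum>j\<in>UNIV. (sqrt (b j) * a j)\<^sup>2) * (\<Sum>j\<in>UNIV. (1 / sqrt (b j))\<^sup>2)"
      by (metis Cauchy_Schwarz_ineq_sum)
    then show ?thesis
      unfolding trace_inv_B using b by (simp add: power_mult_distrib power_divide less_imp_le)
  qed
  moreover have pos: "trace (matrix_inv B) > 0" "trace P > 0"
    unfolding trace_inv_B trace_P using a b by (simp_all add: sum_pos)
  ultimately have "(trace P)\<^sup>2 \<le> S * trace (matrix_inv B)"
    by (meson mult_right_mono less_imp_le order_trans)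
  then have "1 / trace (matrix_inv B) \<le> S / (trace P)\<^sup>2"
    using pos by (simp add: field_simps)
  also have "\<dots> = (\<Sum>x\<in>UNIV. HA f \<mu> x * \<xi> x)"
    unfolding HA_def S_def P_def by (simp add: sum_divide_distrib mult_ac)
  finally show ?thesis unfolding phiA_def B_def .
qed

text \<open>With A = M(\<mu>) = V diag(a) V^T, the scaled eigenvectors w_j = v_j / sqrt(a_j) satisfy
  W A W^T = I, so C = W M(\<xi>) W^T has det C = det M(\<xi>) / det A and trace C = tr(A^-1 M(\<xi>));
  the bound is then AM-GM for the eigenvalues of C.\<close>
lemma phiD_le_HD:
  fixes f :: "'x::finite \<Rightarrow> real^'n"
  assumes \<xi>: "design \<xi>" and \<mu>: "design \<mu>" "invertible (Minf f \<mu>)"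
  shows "phiD f \<xi> \<le> (\<Sum>x\<in>UNIV. HD f \<mu> x * \<xi> x)"
proof -
  define p where "p = real CARD('n)"
  define A where "A = Minf f \<mu>"
  define B where "B = Minf f \<xi>"
  obtain v a where v: "orthonormal_basis v" and eig: "\<And>i. A *v v i = a i *\<^sub>R v i"
    using symmetric_matrix_eigenbasis[OF transpose_Minf[of f \<mu>, folded A_def]] by blast
  have a: "a i > 0" for i
    using Minf_positive_definite[OF \<mu> orthonormal_basis_nonzero[OF v]]
      orthonormal_basis_eigenvalue[OF v eig] by (simp add: A_def)
  define w where "w j = (1 / sqrt (a j)) *\<^sub>R v j" for j
  define W :: "real^'n^'n" where "W = (\<chi> j. w j)"
  define C where "C = W ** B ** transpose W"
  have C_nth: "C $ i $ j = w i \<bullet> (B *v w j)" for i j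
    unfolding C_def W_def by (rule congruence_matrix_nth)
  have "W ** A ** transpose W = mat 1"
    using v a unfolding W_def
    by (simp add: vec_eq_iff congruence_matrix_nth mat_def w_def eig matrix_vector_mult_scaleR
        orthonormal_basis_def real_sqrt_mult[symmetric] less_imp_le less_imp_neq[symmetric])
  then have "det W * det A * det (transpose W) = 1" by (metis det_I det_mul)
  then have det_B: "det B = det A * det C"
    unfolding C_def by (simp add: det_mul algebra_simps)
  have det_A: "det A > 0"
    using a by (simp add: det_eigenbasis[OF v eig] prod_pos)
  have "w j \<bullet> (B *v w i) = w i \<bullet> (B *v w j)" for i j
    using symmetric_matrix_inner[OF transpose_Minf[of f \<xi>], of "w i" "w j"]
    unfolding B_def by (simp add: inner_commute)
  then have sym: "transpose C = C" by (simp add: vec_eq_iff transpose_def C_nth)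
  have psd: "0 \<le> y \<bullet> (C *v y)" for y
  proof -
    have "y \<bullet> (C *v y) = (transpose W *v y) \<bullet> (B *v (transpose W *v y))"
      unfolding C_def by (metis inner_commute matrix_vector_mul_assoc matrix_vector_mult_inner_transpose)
    then show ?thesis using Minf_quadratic_form_nonneg[OF \<xi>] by (simp add: B_def)
  qed
  have det_C: "0 \<le> det C" using sym psd by (rule psd_det_nonneg)
  have amgm: "det C powr (1 / p) \<le> trace C / p"
    unfolding p_def using sym psd by (rule psd_det_root_le_mean_trace)
  have trace_C: "(\<Sum>x\<in>UNIV. \<xi> x * (f x \<bullet> (matrix_inv A *v f x))) = trace C"
  proof -
    have "matrix_inv A *v v i = (1 / a i) *\<^sub>R v i" for i
      using matrix_inv_eigenvector[OF \<mu>(2)[folded A_def] eig] a[of i] by simp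
    then have "f x \<bullet> (matrix_inv A *v f x) = (\<Sum>j\<in>UNIV. (1 / a j) * (v j \<bullet> f x)\<^sup>2)" for x
      by (rule quadratic_form_eigenbasis[OF v])
    then have "(\<Sum>x\<in>UNIV. \<xi> x * (f x \<bullet> (matrix_inv A *v f x)))
        = (\<Sum>j\<in>UNIV. (1 / a j) * (\<Sum>x\<in>UNIV. \<xi> x * (f x \<bullet> v j)\<^sup>2))"
      by (simp add: sum_distrib_left inner_commute mult_ac, subst sum.swap, simp add: mult_ac)
    also have "\<dots> = (\<Sum>j\<in>UNIV. (v j \<bullet> (B *v v j)) / a j)"
      by (simp add: B_def Minf_quadratic_form)
    also have "\<dots> = trace C"
    proof -
      have sqrt: "1 / sqrt (a j) * (1 / sqrt (a j) * t) = t / a j" for j t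
        using a[of j] by (simp add: field_simps)
      show ?thesis
        unfolding trace_def C_nth w_def matrix_vector_mult_scaleR inner_scaleR_left
          inner_scaleR_right sqrt ..
    qed
    finally show ?thesis .
  qed
  have "(\<Sum>x\<in>UNIV. HD f \<mu> x * \<xi> x)
      = det A powr (1 / p) / p * (\<Sum>x\<in>UNIV. \<xi> x * (f x \<bullet> (matrix_inv A *v f x)))"
    unfolding HD_def A_def p_def by (simp add: sum_distrib_left mult_ac)
  then have "(\<Sum>x\<in>UNIV. HD f \<mu> x * \<xi> x) = det A powr (1 / p) * (trace C / p)"
    unfolding trace_C by simp
  moreover have "phiD f \<xi> = det A powr (1 / p) * det C powr (1 / p)"
    unfolding phiD_def B_def[symmetric] det_B p_def using det_A det_C by (simp add: powr_mult)
  moreover have "det A powr (1 / p) * det C powr (1 / p) \<le> det A powr (1 / p) * (trace C / p)"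
    using amgm by (rule mult_left_mono) simp
  ultimately show ?thesis by simp
qed

lemma lp_optimal_value_bounds_sup:
  assumes "Xs \<subseteq> Designs"
    and bound: "\<And>\<xi> \<mu>. \<xi> \<in> Xs \<Longrightarrow> \<mu> \<in> Xi' \<Longrightarrow> phi \<xi> \<le> (\<Sum>x\<in>UNIV. H \<mu> x * \<xi> x)"
    and opt: "lp_optimal H Xi' \<xi>' t'" and "\<xi>' \<in> Xs"
  shows "bdd_above (phi ` Xs) \<and> phi \<xi>' \<le> (SUP \<xi>\<in>Xs. phi \<xi>)
    \<and> (SUP \<xi>\<in>Xs. phi \<xi>) \<le> t'"
proof -
  have "lp_feasible H Xi' \<xi> (phi \<xi>)" if "\<xi> \<in> Xs" for \<xi>
    using that assms(1) bound unfolding lp_feasible_def Designs_def by auto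
  then have le: "phi \<xi> \<le> t'" if "\<xi> \<in> Xs" for \<xi>
    using opt that unfolding lp_optimal_def by blast
  then have "bdd_above (phi ` Xs)" by (intro bdd_aboveI2) auto
  then show ?thesis using \<open>\<xi>' \<in> Xs\<close> le by (auto intro: cSUP_upper2 cSUP_least)
qed

theorem mainTheorem4:
  fixes f :: "'x::finite \<Rightarrow> real^'p::finite"
    and H :: "('x \<Rightarrow> real) \<Rightarrow> 'x \<Rightarrow> real"
    and Xs :: "('x \<Rightarrow> real) set"
    and phi :: "('x \<Rightarrow> real) \<Rightarrow> real"
    and Xi' :: "('x \<Rightarrow> real) set"
    and \<xi>' :: "'x \<Rightarrow> real" and t' :: real
  assumes choice:
    "(H = HD f \<and> Xs = DesignsPlus f \<and> phi = phiD f)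
     \<or> (H = HA f \<and> Xs = DesignsPlus f \<and> phi = phiA f)
     \<or> (\<exists>k U. 1 \<le> k \<and> k \<le> CARD('p) \<and>
          (\<forall>\<mu>\<in>Xi'. ordered_eigenbasis (Minf f \<mu>) (U \<mu>)) \<and>
          H = (\<lambda>\<mu> x. HE f (U \<mu>) k x) \<and> Xs = Designs \<and> phi = phiE f k)"
    and "finite Xi'" and "Xi' \<noteq> {}" and "Xi' \<subseteq> Xs"
    and "lp_optimal H Xi' \<xi>' t'"
    and "\<xi>' \<in> Xs"
  shows "bdd_above (phi ` Xs) \<and> phi \<xi>' \<le> (SUP \<xi>\<in>Xs. phi \<xi>) \<and> (SUP \<xi>\<in>Xs. phi \<xi>) \<le> t'"
proof -
  have "DesignsPlus f \<subseteq> Designs" by (auto simp: DesignsPlus_def Designs_def)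
  from choice show ?thesis
  proof (elim disjE exE conjE)
    assume "H = HD f" "Xs = DesignsPlus f" "phi = phiD f"
    with \<open>DesignsPlus f \<subseteq> Designs\<close> \<open>Xi' \<subseteq> Xs\<close> show ?thesis
      by (intro lp_optimal_value_bounds_sup[OF _ _ assms(5,6)])
        (auto simp: DesignsPlus_def intro!: phiD_le_HD)
  next
    assume "H = HA f" "Xs = DesignsPlus f" "phi = phiA f"
    with \<open>DesignsPlus f \<subseteq> Designs\<close> \<open>Xi' \<subseteq> Xs\<close> show ?thesis
      by (intro lp_optimal_value_bounds_sup[OF _ _ assms(5,6)])
        (auto simp: DesignsPlus_def intro!: phiA_le_HA)
  next
    fix k U
    assume k: "k \<le> CARD('p)" and U: "\<forall>\<mu>\<in>Xi'. ordered_eigenbasis (Minf f \<mu>) (U \<mu>)"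
      and "H = (\<lambda>\<mu> x. HE f (U \<mu>) k x)" "Xs = Designs" "phi = phiE f k"
    moreover have "orthonormal_upto k (U \<mu>)" if "\<mu> \<in> Xi'" for \<mu>
      using U k that unfolding ordered_eigenbasis_def by (meson order_less_le_trans)
    ultimately show ?thesis
      by (intro lp_optimal_value_bounds_sup[OF _ _ assms(5,6)]) (auto intro!: phiE_le_HE)
  qed
qed

end
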